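(* Let $s\ge2$ be an integer. For a positive integer $M$ let $n_k=\lfloor M\sin^2(k\pi/(2s))\rfloor$ for $k=0,\dots,s$. Then there exists $M_0$ such that for all integers $M\ge M_0$: (i) $n_0<n_1<\dots<n_s$ with $n_{k+1}-n_k\ge3$ for all $k$; (ii) the linear system in $x\in\mathbb{R}^{s+1}$ given by $\sum_{k=0}^s(-1)^kx_kn_k^i=0$ for $1\le i\le s-1$, $\sum_{k=0}^s(-1)^kx_k=0$, $\sum_{k=0}^sx_k=2$, has a unique solution, all of whose entries are positive, and $x_k\to\frac2s-\frac1s\delta_{k0}-\frac1s\delta_{ks}$ as $M\to\infty$; (iii) with $\tilde c_k=\sqrt{x_k}$, the vectors $|0_L\rangle=\sum_{k\text{ even}}\tilde c_k|n_k\rangle$ and $|1_L\rangle=\sum_{k\text{ odd}}\tilde c_k|n_k\rangle$ (sums over $0\le k\le s$) are orthonormal, and $P=|0_L\rangle\langle0_L|+|1_L\rangle\langle1_L|$ satisfies $PSP\in\mathbb{R}P$ for all $S\in\mathfrak S_s$; (iv) $\langle0_L|(a^\dagger a)^s|1_L\rangle=0$ and $\big(\langle0_L|(a^\dagger a)^s|0_L\rangle-\langle1_L|(a^\dagger a)^s|1_L\rangle\big)\big/\big((-1)^sM^s4^{1-s}\big)\to1$ as $M\to\infty$. Furthermore, for every $M\ge1$, $2\min_{S\in\mathfrak S_s}\|(a^\dagger a)^s-S\|\le4(M/4)^s$ (operator norm). Consequently the quantum Fisher information $t^2(\langle0_L|(a^\dagger a)^s|0_L\rangle-\langle1_L|(a^\dagger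 a)^s|1_L\rangle)^2$ of this code divided by $4t^2\min_{S\in\mathfrak S_s}\|(a^\dagger a)^s-S\|^2$ tends to $1$ as $M\to\infty$, and both are asymptotic to $16t^2(M/4)^{2s}$.
   Context: Truncated bosonic mode: the Hilbert space is $\mathrm{span}\{|0\rangle,\dots,|M\rangle\}$ with orthonormal Fock states $|m\rangle$, and $a|m\rangle=\sqrt m|m-1\rangle$ ($a|0\rangle=0$), so $a^\dagger a|m\rangle=m|m\rangle$. $\mathfrak S_s$ is the real span of the Hermitian operators $I$, $a+a^\dagger$, $i(a-a^\dagger)$, and $(a^\dagger a)^i$ for $1\le i\le s-1$. $\lfloor x\rfloor$ is the largest integer $\le x$. *)

theory Defs
  imports "HOL-Analysis.Analysis" "HOL-Library.Landau_Symbols"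
begin

text \<open>Truncated bosonic mode with Fock basis |0>,...,|M>.  Vectors are
functions nat => complex (only coordinates 0..M matter), operators are
matrices nat => nat => complex (only entries with indices 0..M matter).\<close>

type_synonym fvec = "nat \<Rightarrow> complex"
type_synonym fop = "nat \<Rightarrow> nat \<Rightarrow> complex"

definition fock :: "nat \<Rightarrow> fvec" where
  "fock n = (\<lambda>m. if m = n then 1 else 0)"

text \<open>annihilation operator: a|m> = sqrt m |m-1>, i.e. <i|a|j> = sqrt j if i = j-1\<close>
definition ann :: "nat \<Rightarrow> fop" where
  "ann M = (\<lambda>i j. if 1 \<le> j \<and> j \<le> M \<and> i = j - 1 then complex_of_real (sqrt (real j)) else 0)"

definition adj :: "fop \<Rightarrow> fop" where
  "adj A = (\<lambda>i j. cnj (A j i))"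

definition idop :: "nat \<Rightarrow> fop" where
  "idop M = (\<lambda>i j. if i = j \<and> i \<le> M then 1 else 0)"

definition mmul :: "nat \<Rightarrow> fop \<Rightarrow> fop \<Rightarrow> fop" where
  "mmul M A B = (\<lambda>i j. \<Sum>k\<le>M. A i k * B k j)"

fun mpow :: "nat \<Rightarrow> fop \<Rightarrow> nat \<Rightarrow> fop" where
  "mpow M A 0 = idop M"
| "mpow M A (Suc n) = mmul M A (mpow M A n)"

definition numop :: "nat \<Rightarrow> fop" where
  "numop M = mmul M (adj (ann M)) (ann M)"

definition mvec :: "nat \<Rightarrow> fop \<Rightarrow> fvec \<Rightarrow> fvec" where
  "mvec M A v = (\<lambda>i. \<Sum>j\<le>M. A i j * v j)"

definition finner :: "nat \<Rightarrow> fvec \<Rightarrow> fvec \<Rightarrow> complex" where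
  "finner M u v = (\<Sum>m\<le>M. cnj (u m) * v m)"

definition fnorm :: "nat \<Rightarrow> fvec \<Rightarrow> real" where
  "fnorm M v = sqrt (\<Sum>m\<le>M. (cmod (v m))\<^sup>2)"

definition opnorm :: "nat \<Rightarrow> fop \<Rightarrow> real" where
  "opnorm M A = Sup {fnorm M (mvec M A v) | v. fnorm M v \<le> 1}"

definition melem :: "nat \<Rightarrow> fvec \<Rightarrow> fop \<Rightarrow> fvec \<Rightarrow> complex" where
  "melem M u A v = finner M u (mvec M A v)"

definition outer :: "fvec \<Rightarrow> fvec \<Rightarrow> fop" where
  "outer u v = (\<lambda>i j. u i * cnj (v j))"

definition frakS :: "nat \<Rightarrow> nat \<Rightarrow> fop set" where
  "frakS M s = {S. \<exists>(r0::real) (r1::real) (r2::real) (c::nat \<Rightarrow> real).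
     S = (\<lambda>i j. complex_of_real r0 * idop M i j
              + complex_of_real r1 * (ann M i j + adj (ann M) i j)
              + complex_of_real r2 * (\<i> * (ann M i j - adj (ann M) i j))
              + (\<Sum>l\<in>{1..s-1}. complex_of_real (c l) * mpow M (numop M) l i j))}"

definition nk :: "nat \<Rightarrow> nat \<Rightarrow> nat \<Rightarrow> nat" where
  "nk M s k = nat \<lfloor>real M * (sin (real k * pi / (2 * real s)))\<^sup>2\<rfloor>"

definition linsys :: "nat \<Rightarrow> nat \<Rightarrow> (nat \<Rightarrow> real) \<Rightarrow> bool" where
  "linsys M s x \<longleftrightarrow>
     (\<forall>i\<in>{1..s-1}. (\<Sum>k\<le>s. (-1)^k * x k * (real (nk M s k))^i) = 0)
     \<and> (\<Sum>k\<le>s. (-1)^k * x k) = 0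
     \<and> (\<Sum>k\<le>s. x k) = 2"

definition code0 :: "nat \<Rightarrow> nat \<Rightarrow> (nat \<Rightarrow> real) \<Rightarrow> fvec" where
  "code0 M s x = (\<lambda>m. \<Sum>k\<in>{k. k \<le> s \<and> even k}. complex_of_real (sqrt (x k)) * fock (nk M s k) m)"

definition code1 :: "nat \<Rightarrow> nat \<Rightarrow> (nat \<Rightarrow> real) \<Rightarrow> fvec" where
  "code1 M s x = (\<lambda>m. \<Sum>k\<in>{k. k \<le> s \<and> odd k}. complex_of_real (sqrt (x k)) * fock (nk M s k) m)"

definition codeP :: "nat \<Rightarrow> nat \<Rightarrow> (nat \<Rightarrow> real) \<Rightarrow> fop" where
  "codeP M s x = (\<lambda>i j. outer (code0 M s x) (code0 M s x) i j + outer (code1 M s x) (code1 M s x) i j)"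

end

theory Submission
  imports Defs "HOL-Computational_Algebra.Polynomial"
begin

text \<open>The constraints on \<open>x\<close> say that the alternating weights \<open>(-1)\<^sup>k x\<^sub>k\<close> annihilate every
  polynomial of degree \<open>< s\<close> at the nodes \<open>n\<^sub>k\<close>. Lagrange interpolation shows that this forces
  \<open>(-1)\<^sup>k x\<^sub>k\<close> to be proportional to \<open>1 / \<Prod>\<^bsub>j \<noteq> k\<^esub> (n\<^sub>k - n\<^sub>j)\<close>, and \<open>\<Sum> x\<^sub>k = 2\<close> fixes the
  constant. The rescaled nodes \<open>n\<^sub>k / M\<close> converge to the Chebyshev extremal points
  \<open>sin\<^sup>2(k\<pi>/2s)\<close>, where the alternating trapezoidal weights annihilate all polynomials of
  degree \<open>< s\<close> (discrete orthogonality of \<open>cos (j k \<pi> / s)\<close>); hence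
  \<open>x\<^sub>k\<close> tends to \<open>2/s\<close> times the trapezoidal weight, which is positive.

  Fock states at least three apart are not coupled by \<open>a\<close> and \<open>a\<^sup>\<dagger>\<close>, so every element of
  \<open>\<frakS>\<^sub>s\<close> acts on the code space as a polynomial of degree \<open>< s\<close> in the number operator; the
  moment conditions then give the Knill-Laflamme conditions. The same duality bounds the signal
  \<open>\<Sum> (-1)\<^sup>k x\<^sub>k n\<^sub>k\<^sup>s\<close> by twice the distance of \<open>(a\<^sup>\<dagger>a)\<^sup>s\<close> to \<open>\<frakS>\<^sub>s\<close>, while the Chebyshev
  polynomial \<open>T\<^sub>s(1 - 2a\<^sup>\<dagger>a/M)\<close> shows that this distance is at most \<open>2(M/4)\<^sup>s\<close>. Both bounds
  are asymptotically attained because the signal is \<open>2M\<^sup>s\<close> divided by a quantity tending to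
  the leading coefficient of that polynomial.\<close>

section \<open>Lagrange interpolation and the alternating moment system\<close>

definition lagrange_denom :: "(nat \<Rightarrow> real) \<Rightarrow> nat \<Rightarrow> nat \<Rightarrow> real" where
  "lagrange_denom z s k = (\<Prod>j\<in>{..s}-{k}. z k - z j)"

definition lagrange_numerator :: "(nat \<Rightarrow> real) \<Rightarrow> nat \<Rightarrow> nat \<Rightarrow> real poly" where
  "lagrange_numerator z s k = (\<Prod>j\<in>{..s}-{k}. [:- z j, 1:])"

lemma poly_lagrange_numerator: "poly (lagrange_numerator z s k) y = (\<Prod>j\<in>{..s}-{k}. y - z j)"
  by (simp add: lagrange_numerator_def poly_prod)

lemma poly_lagrange_numerator_node:
  assumes "i \<le> s"
  shows "poly (lagrange_numerator z s k) (z i) = (if i = k then lagrange_denom z s k else 0)"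
  using assms by (auto simp: poly_lagrange_numerator lagrange_denom_def intro: prod_zero)

lemma degree_lagrange_numerator: "k \<le> s \<Longrightarrow> degree (lagrange_numerator z s k) = s"
  unfolding lagrange_numerator_def by (subst degree_prod_eq_sum_degree) auto

lemma coeff_lagrange_numerator_top: "k \<le> s \<Longrightarrow> coeff (lagrange_numerator z s k) s = 1"
  using lead_coeff_prod[of "\<lambda>j. [:- z j, 1:]" "{..s}-{k}"] degree_lagrange_numerator[of k s z]
  by (simp add: lagrange_numerator_def)

lemma lagrange_denom_nonzero: "inj_on z {..s} \<Longrightarrow> k \<le> s \<Longrightarrow> lagrange_denom z s k \<noteq> 0"
  unfolding lagrange_denom_def by (auto simp: inj_on_def)

lemma poly_eq_sum_coeff:
  fixes p :: "'a::comm_semiring_1 poly"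
  assumes "degree p \<le> n"
  shows "poly p x = (\<Sum>i\<le>n. coeff p i * x ^ i)"
  unfolding poly_altdef
  by (rule sum.mono_neutral_left) (use assms in \<open>auto simp: coeff_eq_0\<close>)

lemma sum_poly_nodes_moments:
  fixes w z :: "nat \<Rightarrow> real"
  assumes moments: "\<forall>i<s. (\<Sum>j\<le>s. w j * z j ^ i) = 0" and "degree p \<le> s"
  shows "(\<Sum>j\<le>s. w j * poly p (z j)) = coeff p s * (\<Sum>j\<le>s. w j * z j ^ s)"
proof -
  have "(\<Sum>j\<le>s. w j * poly p (z j)) = (\<Sum>i\<le>s. coeff p i * (\<Sum>j\<le>s. w j * z j ^ i))"
    unfolding poly_eq_sum_coeff[OF assms(2)] sum_distrib_left by (subst sum.swap) (simp add: algebra_simps)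
  also have "\<dots> = (\<Sum>i\<in>{s}. coeff p i * (\<Sum>j\<le>s. w j * z j ^ i))"
    by (rule sum.mono_neutral_right) (use moments in auto)
  finally show ?thesis by simp
qed

lemma moments_lagrange_denom:
  fixes w z :: "nat \<Rightarrow> real"
  assumes "\<forall>i<s. (\<Sum>j\<le>s. w j * z j ^ i) = 0" and "k \<le> s"
  shows "w k * lagrange_denom z s k = (\<Sum>j\<le>s. w j * z j ^ s)"
proof -
  have "(\<Sum>j\<le>s. w j * poly (lagrange_numerator z s k) (z j)) = (\<Sum>j\<le>s. w j * z j ^ s)"
    using sum_poly_nodes_moments[OF assms(1), of "lagrange_numerator z s k"] assms(2)
    by (simp add: degree_lagrange_numerator coeff_lagrange_numerator_top)
  then show ?thesis
    using assms(2) by (simp add: poly_lagrange_numerator_node if_distrib cong: if_cong)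
qed

lemma sum_poly_div_lagrange_denom:
  fixes z :: "nat \<Rightarrow> real"
  assumes inj: "inj_on z {..s}" and "degree p \<le> s"
  shows "(\<Sum>k\<le>s. poly p (z k) / lagrange_denom z s k) = coeff p s"
proof -
  define q where "q = (\<Sum>k\<le>s. smult (poly p (z k) / lagrange_denom z s k) (lagrange_numerator z s k))"
  have "degree q \<le> s"
    unfolding q_def
    by (intro degree_sum_le) (auto intro: order.trans[OF degree_smult_le] simp: degree_lagrange_numerator)
  moreover have "poly q (z i) = poly p (z i)" if "i \<le> s" for i
  proof -
    have "poly q (z i)
        = (\<Sum>k\<le>s. poly p (z k) / lagrange_denom z s k * (if i = k then lagrange_denom z s k else 0))"
      using that by (simp add: q_def poly_sum poly_lagrange_numerator_node)
    also have "\<dots> = (\<Sum>k\<le>s. if k = i then poly p (z k) else 0)"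
      by (rule sum.cong) (use lagrange_denom_nonzero[OF inj] in auto)
    finally show ?thesis
      using that by simp
  qed
  moreover have "card (z ` {..s}) = Suc s"
    using inj by (simp add: card_image)
  ultimately have "q = p"
    using assms(2) by (intro poly_eqI_degree[of "z ` {..s}"]) auto
  then have "coeff p s = (\<Sum>k\<le>s. poly p (z k) / lagrange_denom z s k * coeff (lagrange_numerator z s k) s)"
    unfolding q_def by (metis (no_types, lifting) coeff_smult coeff_sum sum.cong)
  then show ?thesis
    by (simp add: coeff_lagrange_numerator_top)
qed

definition alt_lagrange_sum :: "(nat \<Rightarrow> real) \<Rightarrow> nat \<Rightarrow> real" where
  "alt_lagrange_sum z s = (\<Sum>j\<le>s. (-1)^j / lagrange_denom z s j)"

definition moment_solution :: "(nat \<Rightarrow> real) \<Rightarrow> nat \<Rightarrow> nat \<Rightarrow> real" where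
  "moment_solution z s k = 2 * (-1)^k / (lagrange_denom z s k * alt_lagrange_sum z s)"

lemma alt_moments_moment_solution:
  assumes "inj_on z {..s}" and "i \<le> s"
  shows "(\<Sum>k\<le>s. (-1)^k * moment_solution z s k * z k ^ i)
           = (if i = s then 2 / alt_lagrange_sum z s else 0)"
proof -
  have "(\<Sum>k\<le>s. (-1)^k * moment_solution z s k * z k ^ i)
      = 2 / alt_lagrange_sum z s * (\<Sum>k\<le>s. z k ^ i / lagrange_denom z s k)"
    by (simp add: moment_solution_def sum_distrib_left divide_inverse ac_simps)
  also have "(\<Sum>k\<le>s. z k ^ i / lagrange_denom z s k) = (if i = s then 1 else 0)"
    using sum_poly_div_lagrange_denom[OF assms(1), of "monom 1 i"] assms(2)
    by (simp add: poly_monom degree_monom_eq)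
  finally show ?thesis by simp
qed

lemma sum_moment_solution:
  assumes "alt_lagrange_sum z s \<noteq> 0"
  shows "(\<Sum>k\<le>s. moment_solution z s k) = 2"
proof -
  have "moment_solution z s k = 2 / alt_lagrange_sum z s * ((-1)^k / lagrange_denom z s k)" for k
    by (simp add: moment_solution_def divide_inverse ac_simps)
  then have "(\<Sum>k\<le>s. moment_solution z s k) = 2 / alt_lagrange_sum z s * alt_lagrange_sum z s"
    by (simp add: alt_lagrange_sum_def sum_distrib_left)
  then show ?thesis using assms by simp
qed

lemma moment_solution_unique:
  assumes inj: "inj_on z {..s}"
    and moments: "\<forall>i<s. (\<Sum>j\<le>s. (-1)^j * y j * z j ^ i) = 0"
    and total: "(\<Sum>j\<le>s. y j) = 2"
    and "k \<le> s"
  shows "y k = moment_solution z s k"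
proof -
  define C where "C = (\<Sum>j\<le>s. (-1)^j * y j * z j ^ s)"
  have y_eq: "y j = (-1)^j * C / lagrange_denom z s j" if "j \<le> s" for j
  proof -
    have "(-1)^j * y j * lagrange_denom z s j = C"
      unfolding C_def using moments_lagrange_denom[of s "\<lambda>j. (-1)^j * y j" z j] moments that
      by simp
    then have "y j * lagrange_denom z s j = (-1)^j * C"
      by (metis left_minus_one_mult_self mult.assoc)
    then show ?thesis
      using lagrange_denom_nonzero[OF inj that] by (simp add: field_simps)
  qed
  have "2 = (\<Sum>j\<le>s. (-1)^j * C / lagrange_denom z s j)"
    using total y_eq by (metis (no_types, lifting) atMost_iff sum.cong)
  also have "\<dots> = C * alt_lagrange_sum z s"
    by (simp add: alt_lagrange_sum_def sum_distrib_left ac_simps)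
  finally have "C = 2 / alt_lagrange_sum z s"
    by (metis mult_zero_right nonzero_eq_divide_eq zero_neq_numeral)
  then show ?thesis
    using y_eq[OF \<open>k \<le> s\<close>] by (simp add: moment_solution_def ac_simps)
qed

lemma tendsto_lagrange_denom:
  assumes "\<And>j. j \<le> s \<Longrightarrow> ((\<lambda>M. z M j) \<longlongrightarrow> u j) F" and "k \<le> s"
  shows "((\<lambda>M. lagrange_denom (z M) s k) \<longlongrightarrow> lagrange_denom u s k) F"
  unfolding lagrange_denom_def
  by (intro tendsto_prod tendsto_diff assms) auto

lemma tendsto_alt_lagrange_sum:
  assumes "\<And>j. j \<le> s \<Longrightarrow> ((\<lambda>M. z M j) \<longlongrightarrow> u j) F" and "inj_on u {..s}"
  shows "((\<lambda>M. alt_lagrange_sum (z M) s) \<longlongrightarrow> alt_lagrange_sum u s) F"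
  unfolding alt_lagrange_sum_def
  using lagrange_denom_nonzero[OF assms(2)]
  by (intro tendsto_sum tendsto_divide tendsto_const tendsto_lagrange_denom assms) auto

lemma tendsto_moment_solution:
  assumes "\<And>j. j \<le> s \<Longrightarrow> ((\<lambda>M. z M j) \<longlongrightarrow> u j) F" and "inj_on u {..s}"
    and "alt_lagrange_sum u s \<noteq> 0" and "k \<le> s"
  shows "((\<lambda>M. moment_solution (z M) s k) \<longlongrightarrow> moment_solution u s k) F"
  unfolding moment_solution_def
  using assms lagrange_denom_nonzero[OF assms(2,4)]
  by (intro tendsto_divide tendsto_mult tendsto_const tendsto_lagrange_denom
      tendsto_alt_lagrange_sum) auto

section \<open>Chebyshev polynomials and the trapezoidal rule\<close>

text \<open>\<open>cheb_poly n\<close> is the Chebyshev polynomial \<open>T\<^sub>n(1 - 2t)\<close>.\<close>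
fun cheb_poly :: "nat \<Rightarrow> real poly" where
  "cheb_poly 0 = 1"
| "cheb_poly (Suc 0) = [:1, -2:]"
| "cheb_poly (Suc (Suc n)) = [:2, -4:] * cheb_poly (Suc n) - cheb_poly n"

definition cheb_lead :: "nat \<Rightarrow> real" where
  "cheb_lead n = (if n = 0 then 1 else - 2 * (- 4) ^ (n - 1))"

lemma poly_cheb_poly: "poly (cheb_poly n) ((sin x)\<^sup>2) = cos (2 * real n * x)"
proof (induction n rule: cheb_poly.induct)
  case (3 n)
  have "poly (cheb_poly (Suc (Suc n))) ((sin x)\<^sup>2)
      = 2 * (1 - 2 * (sin x)\<^sup>2) * cos (2 * real (Suc n) * x) - cos (2 * real n * x)"
    using 3 by (simp add: algebra_simps)
  also have "\<dots> = 2 * cos (2 * x) * cos (2 * real (Suc n) * x) - cos (2 * real n * x)"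
    by (simp add: cos_double_sin)
  also have "\<dots> = cos (2 * real (Suc (Suc n)) * x)"
    using cos_times_cos[of "2 * x" "2 * real (Suc n) * x"] by (simp add: algebra_simps)
  finally show ?case .
qed (simp_all add: cos_double_sin)

lemma coeff_cheb_poly_above: "n < i \<Longrightarrow> coeff (cheb_poly n) i = 0"
  by (induction n arbitrary: i rule: cheb_poly.induct)
     (auto simp: coeff_pCons split: nat.splits)

lemma coeff_cheb_poly_top: "coeff (cheb_poly n) n = cheb_lead n"
  by (induction n rule: cheb_poly.induct)
     (simp_all add: cheb_lead_def coeff_pCons coeff_cheb_poly_above)

lemma cheb_lead_nonzero: "cheb_lead n \<noteq> 0"
  by (simp add: cheb_lead_def)

lemma abs_poly_cheb_poly_le:
  assumes "0 \<le> t" "t \<le> 1"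
  shows "\<bar>poly (cheb_poly n) t\<bar> \<le> 1"
proof -
  have "0 \<le> sqrt t" "sqrt t \<le> 1"
    using assms by auto
  then have "sin (arcsin (sqrt t)) = sqrt t"
    by (intro sin_arcsin) linarith+
  then have "t = (sin (arcsin (sqrt t)))\<^sup>2"
    using assms by simp
  then show ?thesis
    by (metis abs_cos_le_one poly_cheb_poly)
qed

definition trap_weight :: "nat \<Rightarrow> nat \<Rightarrow> real" where
  "trap_weight s k = (if k = 0 \<or> k = s then 1/2 else 1)"

lemma sum_trap_weight_mult:
  assumes "s > 0"
  shows "(\<Sum>k\<le>s. trap_weight s k * f k) = (\<Sum>k\<le>s. f k) - (f 0 + f s) / 2"
proof -
  have "(\<Sum>k\<le>s. f k) - (\<Sum>k\<le>s. trap_weight s k * f k) = (\<Sum>k\<le>s. (1 - trap_weight s k) * f k)"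
    by (simp add: sum_subtractf[symmetric] algebra_simps)
  also have "\<dots> = (\<Sum>k\<in>{0, s}. (1 - trap_weight s k) * f k)"
    by (rule sum.mono_neutral_right) (auto simp: trap_weight_def)
  also have "\<dots> = (f 0 + f s) / 2"
    using assms by (simp add: trap_weight_def)
  finally show ?thesis by linarith
qed

lemma sum_trap_weight: "s > 0 \<Longrightarrow> (\<Sum>k\<le>s. trap_weight s k) = real s"
  using sum_trap_weight_mult[of s "\<lambda>_. 1"] by simp

lemma sin_mult_sum_cos:
  "2 * sin (a/2) * (\<Sum>k\<le>n. cos (real k * a)) = sin ((2 * real n + 1) * a / 2) + sin (a/2)"
proof (induction n)
  case (Suc n)
  have "2 * sin (a/2) * cos (real (Suc n) * a)
      = sin (a/2 + real (Suc n) * a) + sin (a/2 - real (Suc n) * a)"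
    using sin_times_cos[of "a/2" "real (Suc n) * a"] by simp
  also have "a/2 + real (Suc n) * a = (2 * real (Suc n) + 1) * a / 2"
    by (simp add: field_simps)
  also have "a/2 - real (Suc n) * a = - ((2 * real n + 1) * a / 2)"
    by (simp add: field_simps)
  finally show ?case
    using Suc by (simp add: distrib_left)
qed simp

text \<open>Exactness of the trapezoidal rule with \<open>s\<close> panels on \<open>[0, \<pi>]\<close> for \<open>cos (r\<theta>)\<close>.\<close>
lemma trapezoid_sum_cos:
  assumes "0 < r" "r < 2 * s"
  shows "(\<Sum>k\<le>s. trap_weight s k * cos (real k * (real r * pi / real s))) = 0"
proof -
  define a where "a = real r * pi / real s"
  have "s > 0" using assms by simp
  then have sa: "real s * a = real r * pi"
    by (simp add: a_def)
  have "0 < a / 2" "a / 2 < pi"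
    using assms by (auto simp: a_def field_simps)
  then have sin_pos: "sin (a/2) > 0"
    by (rule sin_gt_zero)
  have "sin ((2 * real s + 1) * a / 2) = (-1)^r * sin (a/2)"
    using sa by (simp add: distrib_right add_divide_distrib sin_add)
  then have "sin (a/2) * (2 * (\<Sum>k\<le>s. cos (real k * a))) = sin (a/2) * ((-1)^r + 1)"
    using sin_mult_sum_cos[of a s] by (simp add: algebra_simps)
  then have "2 * (\<Sum>k\<le>s. cos (real k * a)) = (-1)^r + 1"
    using sin_pos by simp
  then show ?thesis
    using sum_trap_weight_mult[OF \<open>s > 0\<close>, of "\<lambda>k. cos (real k * a)"] sa
    by (simp add: a_def)
qed

lemma trapezoid_sum_alt_cos:
  assumes "s > 0" "j \<le> s"
  shows "(\<Sum>k\<le>s. trap_weight s k * (-1)^k * cos (real k * (real j * pi / real s)))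
          = (if j = s then real s else 0)"
proof (cases "j = s")
  case True
  then show ?thesis
    using assms sum_trap_weight by (simp add: mult.assoc)
next
  case False
  have "(-1)^k * cos (real k * (real j * pi / real s))
      = (cos (real k * (real (s - j) * pi / real s)) + cos (real k * (real (s + j) * pi / real s))) / 2"
    for k
  proof -
    have "(-1)^k * cos (real k * (real j * pi / real s))
        = cos (real k * pi) * cos (real k * (real j * pi / real s))"
      by simp
    also have "\<dots> = (cos (real k * pi - real k * (real j * pi / real s))
                   + cos (real k * pi + real k * (real j * pi / real s))) / 2"
      by (rule cos_times_cos)
    finally show ?thesis
      using assms by (simp add: field_simps)
  qed
  then have "(\<Sum>k\<le>s. trap_weight s k * (-1)^k * cos (real k * (real j * pi / real s)))
      = (\<Sum>k\<le>s. trap_weight s k * cos (real k * (real (s - j) * pi / real s))) / 2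
        + (\<Sum>k\<le>s. trap_weight s k * cos (real k * (real (s + j) * pi / real s))) / 2"
    by (simp add: mult.assoc sum.distrib sum_divide_distrib add_divide_distrib distrib_left)
  then show ?thesis
    using trapezoid_sum_cos[of "s - j" s] trapezoid_sum_cos[of "s + j" s] assms False by simp
qed

definition cheb_node :: "nat \<Rightarrow> nat \<Rightarrow> real" where
  "cheb_node s k = (sin (real k * pi / (2 * real s)))\<^sup>2"

lemma poly_cheb_poly_cheb_node:
  "poly (cheb_poly j) (cheb_node s k) = cos (real k * (real j * pi / real s))"
  unfolding cheb_node_def poly_cheb_poly by (simp add: algebra_simps)

lemma trapezoid_sum_poly:
  assumes "s > 0" "degree p \<le> s"
  shows "(\<Sum>k\<le>s. trap_weight s k * (-1)^k * poly p (cheb_node s k)) = coeff p s * real s / cheb_lead s"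
  using assms(2)
proof (induction "degree p" arbitrary: p rule: less_induct)
  case less
  define d where "d = degree p"
  define c where "c = coeff p d / cheb_lead d"
  define q where "q = p - smult c (cheb_poly d)"
  have coeff_q: "coeff q i = 0" if "d \<le> i" for i
    using that coeff_cheb_poly_top[of d] coeff_cheb_poly_above[of d i] cheb_lead_nonzero[of d]
    by (cases "i = d") (auto simp: q_def c_def d_def coeff_eq_0)
  have q_sum: "(\<Sum>k\<le>s. trap_weight s k * (-1)^k * poly q (cheb_node s k))
      = coeff q s * real s / cheb_lead s"
  proof (cases "q = 0")
    case False
    then have "degree q < degree p"
      using coeff_q by (intro degree_lessI) (auto simp: d_def)
    then show ?thesis
      using less by simp
  qed simp
  have cheb_sum: "(\<Sum>k\<le>s. trap_weight s k * (-1)^k * poly (cheb_poly d) (cheb_node s k))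
      = coeff (cheb_poly d) s * real s / cheb_lead s"
    using trapezoid_sum_alt_cos[OF assms(1), of d] less.prems coeff_cheb_poly_top[of s]
      coeff_cheb_poly_above[of d s] cheb_lead_nonzero[of s]
    by (auto simp: poly_cheb_poly_cheb_node d_def)
  have p_eq: "p = q + smult c (cheb_poly d)"
    by (simp add: q_def)
  have "(\<Sum>k\<le>s. trap_weight s k * (-1)^k * poly p (cheb_node s k))
      = (\<Sum>k\<le>s. trap_weight s k * (-1)^k * poly q (cheb_node s k))
        + c * (\<Sum>k\<le>s. trap_weight s k * (-1)^k * poly (cheb_poly d) (cheb_node s k))"
    by (simp add: p_eq algebra_simps sum.distrib sum_distrib_left)
  then show ?case
    using q_sum cheb_sum cheb_lead_nonzero[of s] by (simp add: p_eq field_simps)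
qed

lemma cheb_node_strict_mono:
  assumes "s > 0" "k < k'" "k' \<le> s"
  shows "cheb_node s k < cheb_node s k'"
proof -
  define a b where "a = real k * pi / (2 * real s)" and "b = real k' * pi / (2 * real s)"
  have "a < b"
    unfolding a_def b_def using assms by (intro divide_strict_right_mono mult_strict_right_mono) auto
  moreover have "b \<le> pi / 2"
    unfolding b_def using assms by (simp add: field_simps)
  moreover have "0 \<le> a"
    by (simp add: a_def)
  ultimately have "0 \<le> sin a" and "sin a < sin b"
    using pi_gt_zero by (intro sin_ge_zero sin_monotone_2pi; linarith)+
  then show ?thesis
    unfolding cheb_node_def a_def b_def by (intro power_strict_mono) auto
qed

lemma inj_on_cheb_node: "s > 0 \<Longrightarrow> inj_on (cheb_node s) {..s}"
  by (rule inj_onI) (metis atMost_iff cheb_node_strict_mono less_irrefl linorder_neqE_nat)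

text \<open>The weights \<open>(-1)\<^sup>k w\<^sub>k\<close> of the trapezoidal rule at the Chebyshev nodes are orthogonal to
  all lower moments, so they are proportional to \<open>1 / lagrange_denom\<close>.\<close>
lemma alt_div_lagrange_denom_cheb_node:
  assumes "s > 0" "k \<le> s"
  shows "(-1)^k / lagrange_denom (cheb_node s) s k = trap_weight s k * cheb_lead s / real s"
proof -
  have moments: "(\<Sum>j\<le>s. trap_weight s j * (-1)^j * cheb_node s j ^ i)
      = (if i = s then real s / cheb_lead s else 0)" if "i \<le> s" for i
    using trapezoid_sum_poly[OF assms(1), of "monom 1 i"] that
    by (simp add: poly_monom degree_monom_eq)
  then have "trap_weight s k * (-1)^k * lagrange_denom (cheb_node s) s k = real s / cheb_lead s"
    using moments_lagrange_denom[of s "\<lambda>j. trap_weight s j * (-1)^j" "cheb_node s" k] assms(2)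
    by simp
  then have "trap_weight s k * lagrange_denom (cheb_node s) s k = (-1)^k * (real s / cheb_lead s)"
    by (metis (no_types) left_minus_one_mult_self mult.left_commute mult.commute)
  then show ?thesis
    using lagrange_denom_nonzero[OF inj_on_cheb_node assms(2)] assms cheb_lead_nonzero[of s]
    by (auto simp: field_simps)
qed

lemma alt_lagrange_sum_cheb_node:
  assumes "s > 0"
  shows "alt_lagrange_sum (cheb_node s) s = cheb_lead s"
proof -
  have "alt_lagrange_sum (cheb_node s) s = (\<Sum>j\<le>s. trap_weight s j) * cheb_lead s / real s"
    unfolding alt_lagrange_sum_def sum_distrib_right sum_divide_distrib
    using alt_div_lagrange_denom_cheb_node[OF assms] by simp
  then show ?thesis
    using assms by (simp add: sum_trap_weight)
qed

lemma moment_solution_cheb_node: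
  assumes "s > 0" "k \<le> s"
  shows "moment_solution (cheb_node s) s k = 2 * trap_weight s k / real s"
proof -
  have "moment_solution (cheb_node s) s k
      = 2 * ((-1)^k / lagrange_denom (cheb_node s) s k) / cheb_lead s"
    using assms by (simp add: moment_solution_def alt_lagrange_sum_cheb_node)
  then show ?thesis
    using alt_div_lagrange_denom_cheb_node[OF assms] cheb_lead_nonzero[of s] by simp
qed

section \<open>Operators on the truncated mode\<close>

lemma numop_entry: "numop M i j = (if i = j \<and> i \<le> M then of_nat i else 0)"
proof -
  have "cnj (ann M k i) * ann M k j
      = (if k = i - 1 then (if 1 \<le> i \<and> i \<le> M \<and> i = j then of_nat i else 0) else 0)" for k
    by (auto simp: ann_def simp flip: of_real_mult)
  then have "numop M i j
      = (\<Sum>k\<le>M. if k = i - 1 then (if 1 \<le> i \<and> i \<le> M \<and> i = j then of_nat i else 0) else 0)"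
    by (simp add: numop_def mmul_def adj_def)
  then show ?thesis
    by auto
qed

lemma mpow_numop_entry: "mpow M (numop M) l i j = (if i = j \<and> i \<le> M then (of_nat i) ^ l else 0)"
proof (induction l arbitrary: i j)
  case 0 then show ?case by (simp add: idop_def)
next
  case (Suc l)
  have "mpow M (numop M) (Suc l) i j = (\<Sum>k\<le>M. numop M i k * mpow M (numop M) l k j)"
    by (simp add: mmul_def)
  also have "\<dots> = (\<Sum>k\<le>M. if k = i then (if i \<le> M then of_nat i * mpow M (numop M) l i j else 0) else 0)"
    by (intro sum.cong) (auto simp: numop_entry)
  also have "\<dots> = (if i = j \<and> i \<le> M then (of_nat i) ^ Suc l else 0)"
    using Suc by auto
  finally show ?case .
qed

lemma sum_mult_fock: "(\<Sum>j\<le>M. f j * fock m j) = (if m \<le> M then f m else 0)"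
  by (simp add: fock_def if_distrib cong: if_cong)

lemma fock_sum_bilinear:
  fixes n :: "nat \<Rightarrow> nat" and A :: fop and a b :: "nat \<Rightarrow> complex"
  assumes fin: "finite K1" "finite K2" and inj: "inj_on n (K1 \<union> K2)"
    and le: "\<forall>k\<in>K1 \<union> K2. n k \<le> M"
    and Ad: "\<forall>k1\<in>K1. \<forall>k2\<in>K2. A (n k1) (n k2) = (if k1 = k2 then g (n k1) else 0)"
  shows "(\<Sum>i\<le>M. cnj (\<Sum>k\<in>K1. a k * fock (n k) i) * (\<Sum>j\<le>M. A i j * (\<Sum>k\<in>K2. b k * fock (n k) j)))
        = (\<Sum>k\<in>K1 \<inter> K2. cnj (a k) * b k * g (n k))"
proof -
  have inner: "(\<Sum>j\<le>M. A i j * (\<Sum>k\<in>K2. b k * fock (n k) j)) = (\<Sum>k\<in>K2. b k * A i (n k))" for i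
  proof -
    have "(\<Sum>j\<le>M. A i j * (\<Sum>k\<in>K2. b k * fock (n k) j)) = (\<Sum>k\<in>K2. \<Sum>j\<le>M. (b k * A i j) * fock (n k) j)"
      by (subst sum.swap) (simp add: sum_distrib_left algebra_simps)
    also have "\<dots> = (\<Sum>k\<in>K2. b k * A i (n k))"
      by (intro sum.cong refl) (use le in \<open>simp add: sum_mult_fock\<close>)
    finally show ?thesis .
  qed
  have "(\<Sum>i\<le>M. cnj (\<Sum>k\<in>K1. a k * fock (n k) i) * (\<Sum>k\<in>K2. b k * A i (n k)))
      = (\<Sum>k1\<in>K1. \<Sum>i\<le>M. (cnj (a k1) * (\<Sum>k\<in>K2. b k * A i (n k))) * fock (n k1) i)"
  proof -
    have c: "cnj (\<Sum>k\<in>K1. a k * fock (n k) i) = (\<Sum>k\<in>K1. cnj (a k) * fock (n k) i)" for i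
      by (simp add: fock_def if_distrib cong: if_cong)
    show ?thesis unfolding c sum_distrib_right
      by (subst sum.swap) (simp add: algebra_simps)
  qed
  also have "\<dots> = (\<Sum>k1\<in>K1. cnj (a k1) * (\<Sum>k\<in>K2. b k * A (n k1) (n k)))"
    by (intro sum.cong refl) (use le in \<open>simp add: sum_mult_fock\<close>)
  also have "\<dots> = (\<Sum>k1\<in>K1. \<Sum>k\<in>K2. if k = k1 then cnj (a k1) * b k1 * g (n k1) else 0)"
    by (intro sum.cong refl) (use Ad in \<open>auto simp: sum_distrib_left intro!: sum.cong\<close>)
  also have "\<dots> = (\<Sum>k1\<in>K1. if k1 \<in> K2 then cnj (a k1) * b k1 * g (n k1) else 0)"
    using fin by simp
  also have "\<dots> = (\<Sum>k\<in>K1 \<inter> K2. cnj (a k) * b k * g (n k))"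
    using fin by (simp add: sum.inter_restrict)
  finally show ?thesis by (simp add: inner)
qed

lemma frakS_entry_nonadjacent:
  assumes "S \<in> frakS M s" and "s > 0"
  obtains p :: "real poly" where "degree p < s"
    and "\<And>i j. i \<le> M \<Longrightarrow> j \<le> M \<Longrightarrow> i \<noteq> Suc j \<Longrightarrow> j \<noteq> Suc i \<Longrightarrow>
           S i j = (if i = j then complex_of_real (poly p (real i)) else 0)"
proof -
  obtain r0 r1 r2 :: real and c :: "nat \<Rightarrow> real" where S:
    "S = (\<lambda>i j. complex_of_real r0 * idop M i j
              + complex_of_real r1 * (ann M i j + adj (ann M) i j)
              + complex_of_real r2 * (\<i> * (ann M i j - adj (ann M) i j))
              + (\<Sum>l\<in>{1..s-1}. complex_of_real (c l) * mpow M (numop M) l i j))"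
    using assms(1) unfolding frakS_def by blast
  define p where "p = [:r0:] + (\<Sum>l\<in>{1..s-1}. monom (c l) l)"
  show ?thesis
  proof
    show "degree p < s"
      unfolding p_def using assms(2)
      by (intro degree_add_less degree_sum_less) (auto intro: le_less_trans[OF degree_monom_le])
    fix i j assume "i \<le> M" "j \<le> M" "i \<noteq> Suc j" "j \<noteq> Suc i"
    then show "S i j = (if i = j then complex_of_real (poly p (real i)) else 0)"
      by (auto simp: S p_def poly_sum poly_monom ann_def adj_def idop_def mpow_numop_entry)
  qed
qed

lemma numop_poly_in_frakS:
  assumes "degree p < s"
  shows "\<exists>S\<in>frakS M s. \<forall>i\<le>M. \<forall>j\<le>M. S i j = (if i = j then complex_of_real (poly p (real i)) else 0)"
proof -
  define S where "S = (\<lambda>i j. complex_of_real (coeff p 0) * idop M i j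
              + complex_of_real 0 * (ann M i j + adj (ann M) i j)
              + complex_of_real 0 * (\<i> * (ann M i j - adj (ann M) i j))
              + (\<Sum>l\<in>{1..s-1}. complex_of_real (coeff p l) * mpow M (numop M) l i j))"
  have "poly p x = coeff p 0 + (\<Sum>l\<in>{1..s-1}. coeff p l * x ^ l)" for x
  proof -
    have "{..s-1} = insert 0 {1..s-1}"
      by auto
    then show ?thesis
      using poly_eq_sum_coeff[of p "s - 1" x] assms by simp
  qed
  then have "\<forall>i\<le>M. \<forall>j\<le>M. S i j = (if i = j then complex_of_real (poly p (real i)) else 0)"
    by (simp add: S_def idop_def mpow_numop_entry)
  moreover have "S \<in> frakS M s"
    unfolding frakS_def S_def by blast
  ultimately show ?thesis
    by blast
qed

lemma fnorm_nonneg: "fnorm M v \<ge> 0"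
  by (simp add: fnorm_def sum_nonneg)

lemma norm_le_one_of_fnorm_le_one:
  assumes "fnorm M v \<le> 1" "j \<le> M"
  shows "cmod (v j) \<le> 1"
proof -
  have "(cmod (v j))\<^sup>2 \<le> (\<Sum>m\<le>M. (cmod (v m))\<^sup>2)"
    by (rule member_le_sum) (use assms in auto)
  also have "\<dots> \<le> 1" using assms unfolding fnorm_def
    by (metis real_sqrt_le_1_iff)
  finally show ?thesis by (simp add: power_le_one_iff abs_le_square_iff)
qed

lemma bdd_above_opnorm: "bdd_above {fnorm M (mvec M A v) | v. fnorm M v \<le> 1}"
proof -
  define B where "B = sqrt (\<Sum>i\<le>M. (\<Sum>j\<le>M. cmod (A i j))\<^sup>2)"
  have "fnorm M (mvec M A v) \<le> B" if v: "fnorm M v \<le> 1" for v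
  proof -
    have "cmod (mvec M A v i) \<le> (\<Sum>j\<le>M. cmod (A i j))" for i
    proof -
      have "cmod (mvec M A v i) \<le> (\<Sum>j\<le>M. cmod (A i j * v j))"
        unfolding mvec_def by (rule norm_sum)
      also have "\<dots> \<le> (\<Sum>j\<le>M. cmod (A i j))"
      proof (rule sum_mono)
        fix j assume "j \<in> {..M}"
        then have "cmod (v j) \<le> 1" using norm_le_one_of_fnorm_le_one[OF v] by auto
        then show "cmod (A i j * v j) \<le> cmod (A i j)"
          by (simp add: norm_mult mult_left_le)
      qed
      finally show ?thesis .
    qed
    then have "(\<Sum>i\<le>M. (cmod (mvec M A v i))\<^sup>2) \<le> (\<Sum>i\<le>M. (\<Sum>j\<le>M. cmod (A i j))\<^sup>2)"
      by (intro sum_mono power_mono) auto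
    then show ?thesis unfolding fnorm_def B_def by simp
  qed
  then show ?thesis unfolding bdd_above_def by blast
qed

lemma fnorm_fock: "m \<le> M \<Longrightarrow> fnorm M (fock m) = 1"
proof -
  assume m: "m \<le> M"
  have "(\<Sum>i\<le>M. (cmod (fock m i))\<^sup>2) = (\<Sum>i\<le>M. if i = m then 1 else 0)"
    by (intro sum.cong) (auto simp: fock_def)
  then show ?thesis using m unfolding fnorm_def by simp
qed

lemma norm_diag_le_opnorm:
  assumes "m \<le> M"
  shows "cmod (A m m) \<le> opnorm M A"
proof -
  have "cmod (A m m) \<le> fnorm M (mvec M A (fock m))"
  proof -
    have mv: "mvec M A (fock m) = (\<lambda>i. A i m)"
      unfolding mvec_def using assms by (simp add: sum_mult_fock)
    have "(cmod (A m m))\<^sup>2 \<le> (\<Sum>i\<le>M. (cmod (A i m))\<^sup>2)"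
      by (rule member_le_sum) (use assms in auto)
    then have "sqrt ((cmod (A m m))\<^sup>2) \<le> sqrt (\<Sum>i\<le>M. (cmod (A i m))\<^sup>2)"
      by (rule real_sqrt_le_mono)
    then show ?thesis unfolding mv fnorm_def by simp
  qed
  also have "\<dots> \<le> opnorm M A"
    unfolding opnorm_def
    by (rule cSup_upper[OF _ bdd_above_opnorm]) (use assms fnorm_fock in auto)
  finally show ?thesis .
qed

lemma opnorm_nonneg: "opnorm M A \<ge> 0"
  using norm_diag_le_opnorm[of 0 M A] norm_ge_zero[of "A 0 0"] by linarith

lemma opnorm_diagonal_le:
  assumes diag: "\<And>i j. i \<le> M \<Longrightarrow> j \<le> M \<Longrightarrow> A i j = (if i = j then d i else 0)"
    and bnd: "\<And>i. i \<le> M \<Longrightarrow> cmod (d i) \<le> B"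
  shows "opnorm M A \<le> B"
  unfolding opnorm_def
proof (rule cSup_least)
  show "{fnorm M (mvec M A v) |v. fnorm M v \<le> 1} \<noteq> {}"
  proof -
    have "fnorm M (mvec M A (fock 0)) \<in> {fnorm M (mvec M A v) |v. fnorm M v \<le> 1}"
      using fnorm_fock[of 0 M] by auto
    then show ?thesis by blast
  qed
next
  fix y assume "y \<in> {fnorm M (mvec M A v) |v. fnorm M v \<le> 1}"
  then obtain v where y: "y = fnorm M (mvec M A v)" and v: "fnorm M v \<le> 1" by auto
  have B0: "B \<ge> 0" using bnd[of 0] norm_ge_zero[of "d 0"] by linarith
  have mv: "mvec M A v i = d i * v i" if "i \<le> M" for i
  proof -
    have "mvec M A v i = (\<Sum>j\<le>M. if j = i then d i * v j else 0)"
      unfolding mvec_def by (intro sum.cong) (use that diag in auto)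
    then show ?thesis using that by simp
  qed
  have "(\<Sum>i\<le>M. (cmod (mvec M A v i))\<^sup>2) \<le> (\<Sum>i\<le>M. B\<^sup>2 * (cmod (v i))\<^sup>2)"
  proof (rule sum_mono)
    fix i assume i: "i \<in> {..M}"
    have "(cmod (mvec M A v i))\<^sup>2 = (cmod (d i))\<^sup>2 * (cmod (v i))\<^sup>2"
      using i by (simp add: mv norm_mult power_mult_distrib)
    also have "\<dots> \<le> B\<^sup>2 * (cmod (v i))\<^sup>2"
      using bnd[of i] i by (intro mult_right_mono power_mono) auto
    finally show "(cmod (mvec M A v i))\<^sup>2 \<le> B\<^sup>2 * (cmod (v i))\<^sup>2" .
  qed
  also have "\<dots> = B\<^sup>2 * (fnorm M v)\<^sup>2" by (simp add: fnorm_def sum_distrib_left sum_nonneg)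
  also have "\<dots> \<le> B\<^sup>2 * 1" using v fnorm_nonneg[of M v]
    by (intro mult_left_mono) (auto simp: power_le_one)
  finally have "(fnorm M (mvec M A v))\<^sup>2 \<le> B\<^sup>2" by (simp add: fnorm_def sum_nonneg)
  then show "y \<le> B" unfolding y using B0 by (simp add: abs_le_square_iff[symmetric] fnorm_nonneg)
qed

section \<open>The levels \<open>n\<^sub>k\<close> and the weights \<open>x\<^sub>k\<close>\<close>

lemma nk_eq_floor: "nk M s k = nat \<lfloor>real M * cheb_node s k\<rfloor>"
  by (simp add: nk_def cheb_node_def)

lemma cheb_node_bounds: "0 \<le> cheb_node s k" "cheb_node s k \<le> 1"
  by (auto simp: cheb_node_def abs_square_le_1)

lemma nk_bounds:
  "real M * cheb_node s k - 1 < real (nk M s k)" "real (nk M s k) \<le> real M * cheb_node s k"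
proof -
  have "real (nk M s k) = of_int \<lfloor>real M * cheb_node s k\<rfloor>"
    unfolding nk_eq_floor using cheb_node_bounds(1)[of s k] by simp
  then show "real M * cheb_node s k - 1 < real (nk M s k)" "real (nk M s k) \<le> real M * cheb_node s k"
    by linarith+
qed

lemma nk_le: "nk M s k \<le> M"
proof -
  have "real (nk M s k) \<le> real M * cheb_node s k"
    by (rule nk_bounds)
  also have "\<dots> \<le> real M"
    using cheb_node_bounds[of s k] by (simp add: mult_left_le)
  finally show ?thesis by simp
qed

lemma eventually_nk_gap:
  assumes "s > 0" "k < s"
  shows "eventually (\<lambda>M. nk M s k + 3 \<le> nk M s (Suc k)) sequentially"
proof -
  define d where "d = cheb_node s (Suc k) - cheb_node s k"
  have "d > 0"
    using cheb_node_strict_mono[OF assms(1), of k "Suc k"] assms(2) by (simp add: d_def)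
  have "eventually (\<lambda>M. real M \<ge> 4 / d) sequentially"
    by (rule eventually_sequentiallyI[of "nat \<lceil>4 / d\<rceil>"]) linarith
  then show ?thesis
  proof (rule eventually_mono)
    fix M assume "real M \<ge> 4 / d"
    then have "real M * d \<ge> 4"
      using \<open>d > 0\<close> by (simp add: field_simps)
    then show "nk M s k + 3 \<le> nk M s (Suc k)"
      using nk_bounds[of M s k] nk_bounds[of M s "Suc k"] by (simp add: d_def algebra_simps)
  qed
qed

lemma gap_chain:
  fixes f :: "nat \<Rightarrow> nat"
  assumes "\<forall>k<s. f k + d \<le> f (Suc k)" and "k1 < k2" "k2 \<le> s"
  shows "f k1 + d \<le> f k2"
  using assms(2,3)
proof (induction k2)
  case (Suc k2)
  have "f k2 + d \<le> f (Suc k2)"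
    using assms(1) Suc.prems by simp
  then show ?case
    using Suc by (cases "k1 = k2") auto
qed simp

lemma inj_on_gap_chain:
  fixes f :: "nat \<Rightarrow> nat"
  assumes "\<forall>k<s. f k + d \<le> f (Suc k)" and "d > 0"
  shows "inj_on f {..s}"
proof (rule inj_onI)
  fix a b assume "a \<in> {..s}" "b \<in> {..s}" "f a = f b"
  then show "a = b"
    using gap_chain[OF assms(1), of a b] gap_chain[OF assms(1), of b a] assms(2)
    by (cases a b rule: linorder_cases) auto
qed

definition nk_scaled :: "nat \<Rightarrow> nat \<Rightarrow> nat \<Rightarrow> real" where
  "nk_scaled M s k = real (nk M s k) / real M"

lemma tendsto_nk_scaled: "((\<lambda>M. nk_scaled M s k) \<longlongrightarrow> cheb_node s k) sequentially"
  unfolding nk_scaled_def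
proof (rule real_tendsto_sandwich)
  show "eventually (\<lambda>M. cheb_node s k - 1 / real M \<le> real (nk M s k) / real M) sequentially"
    using eventually_gt_at_top[of "0::nat"]
  proof (rule eventually_mono)
    fix M :: nat assume "M > 0"
    then have "cheb_node s k - 1 / real M = (real M * cheb_node s k - 1) / real M"
      by (simp add: field_simps)
    then show "cheb_node s k - 1 / real M \<le> real (nk M s k) / real M"
      using nk_bounds(1)[of M s k] \<open>M > 0\<close> by (simp add: divide_right_mono)
  qed
  show "eventually (\<lambda>M. real (nk M s k) / real M \<le> cheb_node s k) sequentially"
    using eventually_gt_at_top[of "0::nat"]
    by (rule eventually_mono) (use nk_bounds[of _ s k] in \<open>simp add: field_simps\<close>)
  show "((\<lambda>M. cheb_node s k - 1 / real M) \<longlongrightarrow> cheb_node s k) sequentially"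
    using tendsto_diff[OF tendsto_const lim_1_over_n] by simp
qed (rule tendsto_const)

text \<open>Rescaling the nodes to \<open>[0, 1]\<close> makes them converge to the Chebyshev nodes; the
  solution of the linear system is invariant under this rescaling.\<close>
definition code_weights :: "nat \<Rightarrow> nat \<Rightarrow> nat \<Rightarrow> real" where
  "code_weights s M = moment_solution (nk_scaled M s) s"

lemma linsys_iff_moments:
  assumes "s > 0"
  shows "linsys M s x \<longleftrightarrow>
    (\<forall>i<s. (\<Sum>k\<le>s. (-1)^k * x k * real (nk M s k) ^ i) = 0) \<and> (\<Sum>k\<le>s. x k) = 2"
proof -
  have split: "{..<s} = insert 0 {1..s-1}"
    using assms by auto
  have "(\<forall>i<s. P i) \<longleftrightarrow> (\<forall>i\<in>{..<s}. P i)" for P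
    by auto
  also have "(\<forall>i\<in>{..<s}. P i) \<longleftrightarrow> P 0 \<and> (\<forall>i\<in>{1..s-1}. P i)" for P
    unfolding split by simp
  finally have "(\<forall>i<s. P i) \<longleftrightarrow> P 0 \<and> (\<forall>i\<in>{1..s-1}. P i)" for P .
  then show ?thesis
    unfolding linsys_def by auto
qed

lemma linsys_alt_sum_poly:
  assumes "linsys M s x" and "degree p < s"
  shows "(\<Sum>k\<le>s. (-1)^k * x k * poly p (real (nk M s k))) = 0"
proof -
  have "\<forall>i<s. (\<Sum>k\<le>s. (-1)^k * x k * real (nk M s k) ^ i) = 0"
    using assms linsys_iff_moments[of s M x] by auto
  then show ?thesis
    using sum_poly_nodes_moments[of s "\<lambda>k. (-1)^k * x k" "\<lambda>k. real (nk M s k)" p] assms(2)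
    by (simp add: coeff_eq_0)
qed

lemma alt_moments_scale:
  fixes x z :: "nat \<Rightarrow> real"
  shows "(\<Sum>k\<le>s. (-1)^k * x k * (c * z k) ^ i) = c ^ i * (\<Sum>k\<le>s. (-1)^k * x k * z k ^ i)"
  by (simp add: power_mult_distrib sum_distrib_left ac_simps)

lemma nk_eq_scaled: "M > 0 \<Longrightarrow> real (nk M s k) = real M * nk_scaled M s k"
  by (simp add: nk_scaled_def)

lemma
  assumes "s > 0" "M > 0" and inj: "inj_on (nk M s) {..s}"
  shows inj_on_nk_scaled: "inj_on (nk_scaled M s) {..s}"
    and linsys_iff_scaled: "linsys M s x \<longleftrightarrow>
      (\<forall>i<s. (\<Sum>k\<le>s. (-1)^k * x k * nk_scaled M s k ^ i) = 0) \<and> (\<Sum>k\<le>s. x k) = 2"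
proof -
  show "inj_on (nk_scaled M s) {..s}"
    using inj assms(2) by (auto simp: inj_on_def nk_scaled_def)
  show "linsys M s x \<longleftrightarrow>
      (\<forall>i<s. (\<Sum>k\<le>s. (-1)^k * x k * nk_scaled M s k ^ i) = 0) \<and> (\<Sum>k\<le>s. x k) = 2"
    unfolding linsys_iff_moments[OF assms(1)] nk_eq_scaled[OF assms(2)] alt_moments_scale
    using assms(2) by simp
qed

lemma
  assumes "s > 0" "M > 0" "inj_on (nk M s) {..s}" and G: "alt_lagrange_sum (nk_scaled M s) s \<noteq> 0"
  shows linsys_code_weights: "linsys M s (code_weights s M)"
    and top_moment_code_weights: "(\<Sum>k\<le>s. (-1)^k * code_weights s M k * real (nk M s k) ^ s)
      = 2 * real M ^ s / alt_lagrange_sum (nk_scaled M s) s"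
proof -
  note inj = inj_on_nk_scaled[OF assms(1-3)]
  have "(\<Sum>k\<le>s. (-1)^k * moment_solution (nk_scaled M s) s k * nk_scaled M s k ^ i) = 0"
    if "i < s" for i
    using alt_moments_moment_solution[OF inj, of i] that by simp
  then show "linsys M s (code_weights s M)"
    unfolding linsys_iff_scaled[OF assms(1-3)] code_weights_def
    using sum_moment_solution[OF G] by blast
  show "(\<Sum>k\<le>s. (-1)^k * code_weights s M k * real (nk M s k) ^ s)
      = 2 * real M ^ s / alt_lagrange_sum (nk_scaled M s) s"
    unfolding nk_eq_scaled[OF assms(2)] alt_moments_scale code_weights_def
      alt_moments_moment_solution[OF inj order.refl] by simp
qed

lemma code_weights_unique:
  assumes "s > 0" "M > 0" "inj_on (nk M s) {..s}" and "linsys M s y" "k \<le> s"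
  shows "y k = code_weights s M k"
proof -
  have "\<forall>i<s. (\<Sum>k\<le>s. (-1)^k * y k * nk_scaled M s k ^ i) = 0" "(\<Sum>k\<le>s. y k) = 2"
    using assms(4) unfolding linsys_iff_scaled[OF assms(1-3)] by blast+
  then show ?thesis
    unfolding code_weights_def using moment_solution_unique[OF inj_on_nk_scaled[OF assms(1-3)]] assms(5)
    by blast
qed

section \<open>The code\<close>

lemma split_even_odd:
  fixes f :: "nat \<Rightarrow> 'a::comm_ring_1"
  shows "(\<Sum>k\<le>s. f k) = (\<Sum>k\<in>{k. k \<le> s \<and> even k}. f k) + (\<Sum>k\<in>{k. k \<le> s \<and> odd k}. f k)"
    and "(\<Sum>k\<le>s. (-1)^k * f k) = (\<Sum>k\<in>{k. k \<le> s \<and> even k}. f k) - (\<Sum>k\<in>{k. k \<le> s \<and> odd k}. f k)"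
proof -
  have split: "{..s} = {k. k \<le> s \<and> even k} \<union> {k. k \<le> s \<and> odd k}"
    by auto
  have sum_split: "(\<Sum>k\<le>s. g k) = (\<Sum>k\<in>{k. k \<le> s \<and> even k}. g k) + (\<Sum>k\<in>{k. k \<le> s \<and> odd k}. g k)"
    for g :: "nat \<Rightarrow> 'a"
    unfolding split by (rule sum.union_disjoint) auto
  then show "(\<Sum>k\<le>s. f k) = (\<Sum>k\<in>{k. k \<le> s \<and> even k}. f k) + (\<Sum>k\<in>{k. k \<le> s \<and> odd k}. f k)" .
  have "(\<Sum>k\<in>{k. k \<le> s \<and> even k}. (-1)^k * f k) = (\<Sum>k\<in>{k. k \<le> s \<and> even k}. f k)"
    by (intro sum.cong) auto
  moreover have "(\<Sum>k\<in>{k. k \<le> s \<and> odd k}. (-1)^k * f k) = - (\<Sum>k\<in>{k. k \<le> s \<and> odd k}. f k)"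
    by (simp add: sum_negf[symmetric])
  ultimately show "(\<Sum>k\<le>s. (-1)^k * f k) = (\<Sum>k\<in>{k. k \<le> s \<and> even k}. f k) - (\<Sum>k\<in>{k. k \<le> s \<and> odd k}. f k)"
    using sum_split[of "\<lambda>k. (-1)^k * f k"] by simp
qed

lemma finner_eq_melem_idop: "finner M u v = melem M u (idop M) v"
proof -
  have "(\<Sum>j\<le>M. idop M i j * v j) = (\<Sum>j\<le>M. if i = j then v j else 0)" for i
    by (intro sum.cong) (auto simp: idop_def)
  then have "(\<Sum>j\<le>M. idop M i j * v j) = v i" if "i \<le> M" for i
    using that by simp
  then show ?thesis
    by (simp add: finner_def melem_def mvec_def)
qed

lemma mmul_outer_sum:
  "mmul M (\<lambda>i j. outer u u i j + outer v v i j) (mmul M S (\<lambda>i j. outer u u i j + outer v v i j)) i j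
     = u i * cnj (u j) * melem M u S u + u i * cnj (v j) * melem M u S v
       + v i * cnj (u j) * melem M v S u + v i * cnj (v j) * melem M v S v"
  unfolding melem_def finner_def mvec_def mmul_def outer_def
  by (simp add: sum_distrib_left sum_distrib_right sum.distrib algebra_simps)

locale code_setting =
  fixes M s :: nat and x :: "nat \<Rightarrow> real"
  assumes s_pos: "s > 0"
    and gaps: "\<forall>k<s. nk M s k + 3 \<le> nk M s (Suc k)"
    and solves: "linsys M s x"
    and nonneg: "\<forall>k\<le>s. 0 \<le> x k"
begin

abbreviation evens :: "nat set" where "evens \<equiv> {k. k \<le> s \<and> even k}"
abbreviation odds :: "nat set" where "odds \<equiv> {k. k \<le> s \<and> odd k}"

lemma nk_gap: "k1 < k2 \<Longrightarrow> k2 \<le> s \<Longrightarrow> nk M s k1 + 3 \<le> nk M s k2"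
  by (rule gap_chain[OF gaps])

lemma inj_on_nk: "inj_on (nk M s) {..s}"
  using inj_on_gap_chain[OF gaps] by simp

lemma nk_nonadjacent: "k1 \<le> s \<Longrightarrow> k2 \<le> s \<Longrightarrow> nk M s k1 \<noteq> Suc (nk M s k2)"
  using nk_gap[of k1 k2] nk_gap[of k2 k1] by (cases k1 k2 rule: linorder_cases) auto

lemma sum_evens_odds: "(\<Sum>k\<in>evens. x k) = 1" "(\<Sum>k\<in>odds. x k) = 1"
  using solves split_even_odd[of x s] by (auto simp: linsys_def)

text \<open>A matrix that is diagonal away from the first off-diagonals is diagonal on the code
  space, because the occupied Fock states are at least three apart.\<close>
lemma melem_code_words:
  assumes diag: "\<And>i j. i \<le> M \<Longrightarrow> j \<le> M \<Longrightarrow> i \<noteq> Suc j \<Longrightarrow> j \<noteq> Suc i \<Longrightarrow>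
      A i j = (if i = j then g i else 0)"
  shows "melem M (code0 M s x) A (code1 M s x) = 0"
    and "melem M (code1 M s x) A (code0 M s x) = 0"
    and "melem M (code0 M s x) A (code0 M s x) = (\<Sum>k\<in>evens. complex_of_real (x k) * g (nk M s k))"
    and "melem M (code1 M s x) A (code1 M s x) = (\<Sum>k\<in>odds. complex_of_real (x k) * g (nk M s k))"
proof -
  have A_nodes: "A (nk M s k1) (nk M s k2) = (if k1 = k2 then g (nk M s k1) else 0)"
    if "k1 \<le> s" "k2 \<le> s" for k1 k2
  proof -
    have "A (nk M s k1) (nk M s k2) = (if nk M s k1 = nk M s k2 then g (nk M s k1) else 0)"
      using diag[OF nk_le nk_le nk_nonadjacent[OF that] nk_nonadjacent[OF that(2,1)]] .
    then show ?thesis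
      using inj_on_nk that by (auto simp: inj_on_def)
  qed
  have code_melem: "melem M (\<lambda>m. \<Sum>k\<in>K1. complex_of_real (sqrt (x k)) * fock (nk M s k) m) A
      (\<lambda>m. \<Sum>k\<in>K2. complex_of_real (sqrt (x k)) * fock (nk M s k) m)
      = (\<Sum>k\<in>K1 \<inter> K2. complex_of_real (x k) * g (nk M s k))"
    if "K1 \<subseteq> {..s}" "K2 \<subseteq> {..s}" for K1 K2
  proof -
    have fin: "finite K1" "finite K2" and inj: "inj_on (nk M s) (K1 \<union> K2)"
      using that finite_subset inj_on_subset[OF inj_on_nk] by auto
    have Ad: "\<forall>k1\<in>K1. \<forall>k2\<in>K2. A (nk M s k1) (nk M s k2) = (if k1 = k2 then g (nk M s k1) else 0)"
      using that by (auto simp: subset_iff A_nodes)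
    have "melem M (\<lambda>m. \<Sum>k\<in>K1. complex_of_real (sqrt (x k)) * fock (nk M s k) m) A
        (\<lambda>m. \<Sum>k\<in>K2. complex_of_real (sqrt (x k)) * fock (nk M s k) m)
        = (\<Sum>k\<in>K1 \<inter> K2. cnj (complex_of_real (sqrt (x k))) * complex_of_real (sqrt (x k)) * g (nk M s k))"
      unfolding melem_def finner_def mvec_def using nk_le by (intro fock_sum_bilinear[OF fin inj _ Ad]) auto
    also have "\<dots> = (\<Sum>k\<in>K1 \<inter> K2. complex_of_real (x k) * g (nk M s k))"
      using that nonneg by (intro sum.cong) (auto simp flip: of_real_mult)
    finally show ?thesis .
  qed
  have "evens \<subseteq> {..s}" "odds \<subseteq> {..s}" "evens \<inter> odds = {}" "odds \<inter> evens = {}"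
    by auto
  then show "melem M (code0 M s x) A (code1 M s x) = 0"
    and "melem M (code1 M s x) A (code0 M s x) = 0"
    and "melem M (code0 M s x) A (code0 M s x) = (\<Sum>k\<in>evens. complex_of_real (x k) * g (nk M s k))"
    and "melem M (code1 M s x) A (code1 M s x) = (\<Sum>k\<in>odds. complex_of_real (x k) * g (nk M s k))"
    unfolding code0_def code1_def by (simp_all add: code_melem)
qed

lemma code_orthonormal:
  "finner M (code0 M s x) (code0 M s x) = 1"
  "finner M (code1 M s x) (code1 M s x) = 1"
  "finner M (code0 M s x) (code1 M s x) = 0"
  using melem_code_words[of "idop M" "\<lambda>_. 1"] sum_evens_odds
  by (simp_all add: finner_eq_melem_idop idop_def flip: of_real_sum)

lemma melem_code_numop_pow:
  "melem M (code0 M s x) (mpow M (numop M) l) (code1 M s x) = 0"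
  "melem M (code0 M s x) (mpow M (numop M) l) (code0 M s x)
     - melem M (code1 M s x) (mpow M (numop M) l) (code1 M s x)
     = complex_of_real (\<Sum>k\<le>s. (-1)^k * x k * real (nk M s k) ^ l)"
  using melem_code_words[of "mpow M (numop M) l" "\<lambda>m. of_nat m ^ l"]
    split_even_odd(2)[of "\<lambda>k. x k * real (nk M s k) ^ l" s]
  by (simp_all add: mpow_numop_entry mult.assoc)

lemma compressed_frakS:
  assumes "S \<in> frakS M s"
  shows "\<exists>r::real. \<forall>i\<le>M. \<forall>j\<le>M.
    mmul M (codeP M s x) (mmul M S (codeP M s x)) i j = complex_of_real r * codeP M s x i j"
proof -
  obtain p where "degree p < s" and S_diag: "\<And>i j. i \<le> M \<Longrightarrow> j \<le> M \<Longrightarrow> i \<noteq> Suc j \<Longrightarrow> j \<noteq> Suc i \<Longrightarrow>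
      S i j = (if i = j then complex_of_real (poly p (real i)) else 0)"
    using frakS_entry_nonadjacent[OF assms s_pos] by blast
  define r where "r = (\<Sum>k\<in>evens. x k * poly p (real (nk M s k)))"
  have "(\<Sum>k\<in>odds. x k * poly p (real (nk M s k))) = r"
    using linsys_alt_sum_poly[OF solves \<open>degree p < s\<close>]
      split_even_odd(2)[of "\<lambda>k. x k * poly p (real (nk M s k))" s]
    by (simp add: r_def mult.assoc)
  then have "melem M (code0 M s x) S (code0 M s x) = complex_of_real r"
    and "melem M (code1 M s x) S (code1 M s x) = complex_of_real r"
    and "melem M (code0 M s x) S (code1 M s x) = 0"
    and "melem M (code1 M s x) S (code0 M s x) = 0"
    using melem_code_words[of S "\<lambda>m. complex_of_real (poly p (real m))", OF S_diag]
    by (simp_all add: r_def flip: of_real_mult of_real_sum)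
  then show ?thesis
    unfolding codeP_def mmul_outer_sum by (auto simp: outer_def algebra_simps)
qed

end

section \<open>Distance of \<open>(a\<^sup>\<dagger>a)\<^sup>s\<close> to \<open>\<frakS>\<^sub>s\<close>\<close>

abbreviation frakS_distance :: "nat \<Rightarrow> nat \<Rightarrow> real" where
  "frakS_distance M s \<equiv> INF S\<in>frakS M s. opnorm M (\<lambda>i j. mpow M (numop M) s i j - S i j)"

lemma bdd_below_frakS_distance:
  "bdd_below ((\<lambda>S. opnorm M (\<lambda>i j. mpow M (numop M) s i j - S i j)) ` frakS M s)"
  by (rule bdd_belowI[of _ 0]) (auto simp: opnorm_nonneg)

lemma frakS_distance_le:
  assumes "s > 0" "M \<ge> 1"
  shows "frakS_distance M s \<le> 2 * (real M / 4) ^ s"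
proof -
  define c where "c = real M ^ s / cheb_lead s"
  define q where "q = pcompose (cheb_poly s) [:0, 1 / real M:]"
  define p where "p = monom 1 s - smult c q"
  have coeff_q: "coeff q i = coeff (cheb_poly s) i / real M ^ i" for i
    by (simp add: q_def coeff_pcompose_linear power_one_over)
  have "coeff p i = 0" if "s \<le> i" for i
    using that assms cheb_lead_nonzero[of s] coeff_cheb_poly_above[of s i]
    by (cases "i = s") (auto simp: p_def c_def coeff_q coeff_cheb_poly_top)
  then have "degree p < s"
    using assms(1) by (intro degree_lessI) auto
  then obtain S where "S \<in> frakS M s"
    and S_diag: "\<forall>i\<le>M. \<forall>j\<le>M. S i j = (if i = j then complex_of_real (poly p (real i)) else 0)"
    using numop_poly_in_frakS by blast
  have abs_lead: "\<bar>cheb_lead s\<bar> = 4 ^ s / 2"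
    using assms(1) by (cases s) (simp_all add: cheb_lead_def abs_mult power_abs)
  have abs_c: "\<bar>c\<bar> = 2 * (real M / 4) ^ s"
    unfolding c_def abs_divide abs_lead by (simp add: power_divide)
  have "opnorm M (\<lambda>i j. mpow M (numop M) s i j - S i j) \<le> 2 * (real M / 4) ^ s"
  proof (rule opnorm_diagonal_le)
    fix i j assume "i \<le> M" "j \<le> M"
    then show "mpow M (numop M) s i j - S i j
        = (if i = j then complex_of_real (c * poly (cheb_poly s) (real i / real M)) else 0)"
      using S_diag by (simp add: mpow_numop_entry p_def q_def poly_pcompose poly_monom)
  next
    fix i assume "i \<le> M"
    then have "\<bar>poly (cheb_poly s) (real i / real M)\<bar> \<le> 1"
      using assms(2) by (intro abs_poly_cheb_poly_le) auto
    then show "cmod (complex_of_real (c * poly (cheb_poly s) (real i / real M))) \<le> 2 * (real M / 4) ^ s"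
      unfolding norm_of_real abs_mult abs_c by (simp add: mult_left_le)
  qed
  then show ?thesis
    using cINF_lower[OF bdd_below_frakS_distance \<open>S \<in> frakS M s\<close>] by linarith
qed

text \<open>The weights \<open>(-1)\<^sup>k x\<^sub>k\<close> annihilate the diagonal of every \<open>S \<in> \<frakS>\<^sub>s\<close> at the levels, so the
  signal is a combination of diagonal entries of \<open>(a\<^sup>\<dagger>a)\<^sup>s - S\<close> with total weight \<open>\<Sum> x\<^sub>k = 2\<close>.\<close>
lemma alt_moment_le_frakS_distance:
  assumes "s > 0" "linsys M s x" "\<forall>k\<le>s. 0 \<le> x k"
  shows "\<bar>\<Sum>k\<le>s. (-1)^k * x k * real (nk M s k) ^ s\<bar> \<le> 2 * frakS_distance M s"
proof -
  have "\<bar>\<Sum>k\<le>s. (-1)^k * x k * real (nk M s k) ^ s\<bar> / 2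
      \<le> opnorm M (\<lambda>i j. mpow M (numop M) s i j - S i j)" if S_in: "S \<in> frakS M s" for S
  proof -
    obtain p where "degree p < s" and S_diag: "\<And>i j. i \<le> M \<Longrightarrow> j \<le> M \<Longrightarrow> i \<noteq> Suc j \<Longrightarrow> j \<noteq> Suc i \<Longrightarrow>
        S i j = (if i = j then complex_of_real (poly p (real i)) else 0)"
      using frakS_entry_nonadjacent[OF S_in assms(1)] by blast
    define d where "d = opnorm M (\<lambda>i j. mpow M (numop M) s i j - S i j)"
    have d_bound: "\<bar>real m ^ s - poly p (real m)\<bar> \<le> d" if "m \<le> M" for m
    proof -
      have "mpow M (numop M) s m m - S m m = complex_of_real (real m ^ s - poly p (real m))"
        using that S_diag[OF that that] by (simp add: mpow_numop_entry)
      then have "cmod (mpow M (numop M) s m m - S m m) = \<bar>real m ^ s - poly p (real m)\<bar>"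
        by (simp only: norm_of_real)
      then show ?thesis
        using norm_diag_le_opnorm[OF that, of "\<lambda>i j. mpow M (numop M) s i j - S i j"]
        unfolding d_def by linarith
    qed
    have "\<bar>\<Sum>k\<le>s. (-1)^k * x k * real (nk M s k) ^ s\<bar>
        = \<bar>\<Sum>k\<le>s. (-1)^k * x k * (real (nk M s k) ^ s - poly p (real (nk M s k)))\<bar>"
      using linsys_alt_sum_poly[OF assms(2) \<open>degree p < s\<close>]
      by (simp add: right_diff_distrib sum_subtractf)
    also have "\<dots> \<le> (\<Sum>k\<le>s. x k * \<bar>real (nk M s k) ^ s - poly p (real (nk M s k))\<bar>)"
      using assms(3) by (intro order.trans[OF sum_abs] sum_mono) (simp add: abs_mult power_abs)
    also have "\<dots> \<le> (\<Sum>k\<le>s. x k * d)"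
      using assms(3) d_bound[OF nk_le] by (intro sum_mono mult_left_mono) auto
    also have "\<dots> = 2 * d"
      using assms(2) by (simp add: linsys_def flip: sum_distrib_right)
    finally show ?thesis
      by (simp add: d_def)
  qed
  moreover have "frakS M s \<noteq> {}"
    using numop_poly_in_frakS[of 0 s M] assms(1) by auto
  ultimately show ?thesis
    using cINF_greatest[of "frakS M s"] by (metis (no_types, lifting) mult.commute pos_divide_le_eq zero_less_numeral)
qed

section \<open>Asymptotics\<close>

lemma tendsto_alt_lagrange_sum_nk_scaled:
  assumes "s > 0"
  shows "((\<lambda>M. alt_lagrange_sum (nk_scaled M s) s) \<longlongrightarrow> cheb_lead s) sequentially"
  using tendsto_alt_lagrange_sum[OF tendsto_nk_scaled inj_on_cheb_node[OF assms]]
  by (simp add: alt_lagrange_sum_cheb_node[OF assms])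

lemma tendsto_code_weights:
  assumes "s > 0" "k \<le> s"
  shows "((\<lambda>M. code_weights s M k) \<longlongrightarrow> 2 * trap_weight s k / real s) sequentially"
  unfolding code_weights_def moment_solution_cheb_node[OF assms, symmetric]
  using alt_lagrange_sum_cheb_node[OF assms(1)] cheb_lead_nonzero[of s]
  by (intro tendsto_moment_solution tendsto_nk_scaled inj_on_cheb_node assms) auto

lemma eventually_code_setting:
  assumes "s > 0"
  shows "eventually (\<lambda>M. code_setting M s (code_weights s M) \<and> M \<ge> 1
    \<and> alt_lagrange_sum (nk_scaled M s) s \<noteq> 0 \<and> (\<forall>k\<le>s. code_weights s M k > 0)) sequentially"
proof -
  have "eventually (\<lambda>M. \<forall>k\<in>{..<s}. nk M s k + 3 \<le> nk M s (Suc k)) sequentially"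
    using eventually_nk_gap[OF assms] by (intro eventually_ball_finite) auto
  moreover have "eventually (\<lambda>M. \<forall>k\<in>{..s}. code_weights s M k > 0) sequentially"
    using assms
    by (intro eventually_ball_finite ballI order_tendstoD(1)[OF tendsto_code_weights])
      (auto simp: trap_weight_def)
  moreover have "eventually (\<lambda>M. alt_lagrange_sum (nk_scaled M s) s \<noteq> 0) sequentially"
    by (rule tendsto_imp_eventually_ne[OF tendsto_alt_lagrange_sum_nk_scaled[OF assms] cheb_lead_nonzero])
  moreover have "eventually (\<lambda>M. M \<ge> 1) sequentially"
    by (rule eventually_ge_at_top)
  ultimately show ?thesis
  proof eventually_elim
    case (elim M)
    then have "inj_on (nk M s) {..s}"
      using inj_on_gap_chain[of s "nk M s" 3] by simp
    then have "linsys M s (code_weights s M)"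
      using elim assms by (intro linsys_code_weights) auto
    then have "code_setting M s (code_weights s M)"
      using elim assms by unfold_locales (auto simp: less_imp_le)
    then show ?case
      using elim by auto
  qed
qed

lemma eventually_code_properties:
  assumes "s > 0"
  shows "eventually (\<lambda>M.
          (\<forall>k<s. nk M s k < nk M s (k+1) \<and> nk M s (k+1) \<ge> nk M s k + 3)
        \<and> linsys M s (code_weights s M)
        \<and> (\<forall>y. linsys M s y \<longrightarrow> (\<forall>k\<le>s. y k = code_weights s M k))
        \<and> (\<forall>k\<le>s. code_weights s M k > 0)
        \<and> finner M (code0 M s (code_weights s M)) (code0 M s (code_weights s M)) = 1
        \<and> finner M (code1 M s (code_weights s M)) (code1 M s (code_weights s M)) = 1
        \<and> finner M (code0 M s (code_weights s M)) (code1 M s (code_weights s M)) = 0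
        \<and> (\<forall>S\<in>frakS M s. \<exists>r::real. \<forall>i\<le>M. \<forall>j\<le>M.
              mmul M (codeP M s (code_weights s M)) (mmul M S (codeP M s (code_weights s M))) i j
                = complex_of_real r * codeP M s (code_weights s M) i j)
        \<and> melem M (code0 M s (code_weights s M)) (mpow M (numop M) s) (code1 M s (code_weights s M)) = 0)
    sequentially"
  using eventually_code_setting[OF assms]
proof eventually_elim
  case (elim M)
  then interpret code_setting M s "code_weights s M"
    by blast
  have "\<forall>y. linsys M s y \<longrightarrow> (\<forall>k\<le>s. y k = code_weights s M k)"
    using code_weights_unique[OF assms _ inj_on_nk] elim by auto
  moreover have "\<forall>k<s. nk M s k < nk M s (k+1) \<and> nk M s (k+1) \<ge> nk M s k + 3"
    using gaps by auto
  ultimately show ?case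
    using solves elim code_orthonormal compressed_frakS melem_code_numop_pow(1) by blast
qed

abbreviation logical_signal :: "nat \<Rightarrow> nat \<Rightarrow> (nat \<Rightarrow> real) \<Rightarrow> complex" where
  "logical_signal M s x \<equiv> melem M (code0 M s x) (mpow M (numop M) s) (code0 M s x)
     - melem M (code1 M s x) (mpow M (numop M) s) (code1 M s x)"

lemma eventually_logical_signal:
  assumes "s > 0"
  shows "eventually (\<lambda>M. logical_signal M s (code_weights s M)
      = complex_of_real (2 * real M ^ s / alt_lagrange_sum (nk_scaled M s) s)
    \<and> \<bar>2 * real M ^ s / alt_lagrange_sum (nk_scaled M s) s\<bar> \<le> 2 * frakS_distance M s
    \<and> 2 * frakS_distance M s \<le> 4 * (real M / 4) ^ s
    \<and> 2 * real M ^ s / alt_lagrange_sum (nk_scaled M s) s \<noteq> 0) sequentially"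
  using eventually_code_setting[OF assms]
proof eventually_elim
  case (elim M)
  then interpret code_setting M s "code_weights s M"
    by blast
  have "(\<Sum>k\<le>s. (-1)^k * code_weights s M k * real (nk M s k) ^ s)
      = 2 * real M ^ s / alt_lagrange_sum (nk_scaled M s) s"
    using elim by (intro top_moment_code_weights assms inj_on_nk) auto
  then show ?case
    using melem_code_numop_pow(2)[of s] alt_moment_le_frakS_distance[OF assms solves nonneg]
      frakS_distance_le[OF assms] elim
    by auto
qed

lemma cheb_lead_eq: "s > 0 \<Longrightarrow> cheb_lead s = (-1)^s * 4 ^ s / 2"
  by (cases s) (simp_all add: cheb_lead_def power_mult_distrib[symmetric])

lemma tendsto_logical_signal:
  assumes "s > 0"
  shows "((\<lambda>M. logical_signal M s (code_weights s M)
      / complex_of_real ((-1)^s * real M ^ s * 4 powr (1 - real s))) \<longlongrightarrow> 1) sequentially"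
proof -
  define G where "G M = alt_lagrange_sum (nk_scaled M s) s" for M
  define c where "c = (-1)^s * (4::real) powr (1 - real s)"
  have c_eq: "c = (-1)^s * 4 / 4 ^ s"
    by (simp add: c_def powr_diff powr_realpow)
  then have "c \<noteq> 0"
    by simp
  have "2 / cheb_lead s / c = 1 / ((-1)^s * (-1)^s)"
    unfolding c_eq cheb_lead_eq[OF assms] by (simp add: field_simps)
  then have c_lim: "2 / cheb_lead s / c = 1"
    by simp
  have "((\<lambda>M. complex_of_real (2 / G M / c)) \<longlongrightarrow> complex_of_real (2 / cheb_lead s / c)) sequentially"
    unfolding G_def using \<open>c \<noteq> 0\<close> cheb_lead_nonzero[of s]
    by (intro tendsto_of_real tendsto_divide tendsto_const tendsto_alt_lagrange_sum_nk_scaled assms) auto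
  moreover have "eventually (\<lambda>M. complex_of_real (2 / G M / c)
      = logical_signal M s (code_weights s M) / complex_of_real ((-1)^s * real M ^ s * 4 powr (1 - real s)))
      sequentially"
    using eventually_logical_signal[OF assms] eventually_gt_at_top[of 0]
  proof eventually_elim
    case (elim M)
    have "2 * real M ^ s / G M / ((-1)^s * real M ^ s * 4 powr (1 - real s)) = 2 / G M / c"
      using elim by (simp add: c_def)
    then show ?case
      using elim by (metis G_def of_real_divide)
  qed
  ultimately show ?thesis
    unfolding c_lim of_real_1 by (rule Lim_transform_eventually)
qed

lemma square_ratio_bounds:
  fixes d f k :: real
  assumes "\<bar>d\<bar> \<le> 2 * f" "2 * f \<le> k" "d \<noteq> 0"
  shows "(d / k)\<^sup>2 \<le> d\<^sup>2 / (4 * f\<^sup>2)" "d\<^sup>2 / (4 * f\<^sup>2) \<le> 1"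
    "(d / k)\<^sup>2 \<le> 4 * f\<^sup>2 / k\<^sup>2" "4 * f\<^sup>2 / k\<^sup>2 \<le> 1"
proof -
  have f_pos: "f > 0"
    using assms by linarith
  then have k_pos: "k > 0"
    using assms by linarith
  have d2: "d\<^sup>2 \<le> 4 * f\<^sup>2"
    using power_mono[OF assms(1) abs_ge_zero, of 2] by (simp add: power_mult_distrib)
  have k2: "4 * f\<^sup>2 \<le> k\<^sup>2"
    using power_mono[OF assms(2), of 2] f_pos by (simp add: power_mult_distrib)
  have "4 * f\<^sup>2 > 0"
    using f_pos by simp
  then show "(d / k)\<^sup>2 \<le> d\<^sup>2 / (4 * f\<^sup>2)" "d\<^sup>2 / (4 * f\<^sup>2) \<le> 1"
    "(d / k)\<^sup>2 \<le> 4 * f\<^sup>2 / k\<^sup>2" "4 * f\<^sup>2 / k\<^sup>2 \<le> 1"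
    using d2 k2 k_pos
    by (auto simp: power_divide intro: divide_left_mono divide_right_mono)
qed

lemma tendsto_square_ratios:
  fixes d f k :: "'a \<Rightarrow> real" and t :: real
  assumes "t \<noteq> 0" and lim: "((\<lambda>n. (d n / k n)\<^sup>2) \<longlongrightarrow> 1) F"
    and bounds: "eventually (\<lambda>n. \<bar>d n\<bar> \<le> 2 * f n \<and> 2 * f n \<le> k n \<and> d n \<noteq> 0) F"
  shows "((\<lambda>n. t\<^sup>2 * (d n)\<^sup>2 / (4 * t\<^sup>2 * (f n)\<^sup>2)) \<longlongrightarrow> 1) F"
    and "((\<lambda>n. t\<^sup>2 * (d n)\<^sup>2 / (t\<^sup>2 * (k n)\<^sup>2)) \<longlongrightarrow> 1) F"
    and "((\<lambda>n. 4 * t\<^sup>2 * (f n)\<^sup>2 / (t\<^sup>2 * (k n)\<^sup>2)) \<longlongrightarrow> 1) F"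
proof -
  have t2: "t\<^sup>2 \<noteq> 0"
    using assms(1) by simp
  show "((\<lambda>n. t\<^sup>2 * (d n)\<^sup>2 / (4 * t\<^sup>2 * (f n)\<^sup>2)) \<longlongrightarrow> 1) F"
    using bounds assms(1)
    by (intro real_tendsto_sandwich[OF _ _ lim tendsto_const])
      (auto elim!: eventually_mono dest: square_ratio_bounds)
  show "((\<lambda>n. 4 * t\<^sup>2 * (f n)\<^sup>2 / (t\<^sup>2 * (k n)\<^sup>2)) \<longlongrightarrow> 1) F"
    using bounds assms(1)
    by (intro real_tendsto_sandwich[OF _ _ lim tendsto_const])
      (auto elim!: eventually_mono dest: square_ratio_bounds)
  show "((\<lambda>n. t\<^sup>2 * (d n)\<^sup>2 / (t\<^sup>2 * (k n)\<^sup>2)) \<longlongrightarrow> 1) F"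
    using lim t2 by (simp add: power_divide)
qed

lemma tendsto_signal_bound_ratio:
  assumes "s > 0"
  shows "((\<lambda>M. (Re (logical_signal M s (code_weights s M)) / (4 * (real M / 4) ^ s))\<^sup>2) \<longlongrightarrow> 1)
    sequentially"
proof -
  define G where "G M = alt_lagrange_sum (nk_scaled M s) s" for M
  have "(4 ^ s / (2 * cheb_lead s))\<^sup>2 = (1::real)"
    by (simp add: cheb_lead_eq[OF assms] power_mult_distrib power2_eq_square)
  moreover have "((\<lambda>M. (4 ^ s / (2 * G M))\<^sup>2) \<longlongrightarrow> (4 ^ s / (2 * cheb_lead s))\<^sup>2) sequentially"
    unfolding G_def using cheb_lead_nonzero[of s]
    by (intro tendsto_intros tendsto_alt_lagrange_sum_nk_scaled assms) auto
  ultimately have "((\<lambda>M. (4 ^ s / (2 * G M))\<^sup>2) \<longlongrightarrow> 1) sequentially"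
    by simp
  moreover have "eventually (\<lambda>M. (4 ^ s / (2 * G M))\<^sup>2
      = (Re (logical_signal M s (code_weights s M)) / (4 * (real M / 4) ^ s))\<^sup>2) sequentially"
    using eventually_logical_signal[OF assms] eventually_gt_at_top[of 0]
  proof eventually_elim
    case (elim M)
    then have "Re (logical_signal M s (code_weights s M)) / (4 * (real M / 4) ^ s)
        = (2 * real M ^ s / G M) / (4 * real M ^ s / 4 ^ s)"
      by (simp add: G_def power_divide)
    also have "\<dots> = 4 ^ s / (2 * G M)"
      using elim by (simp add: field_simps)
    finally show ?case
      by simp
  qed
  ultimately show ?thesis
    by (rule Lim_transform_eventually)
qed

lemma qfi_asymptotics:
  assumes "s > 0" "t \<noteq> 0"
  shows "((\<lambda>M. t\<^sup>2 * (Re (logical_signal M s (code_weights s M)))\<^sup>2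
            / (4 * t\<^sup>2 * (frakS_distance M s)\<^sup>2)) \<longlongrightarrow> 1) sequentially"
    and "asymp_equiv (\<lambda>M. t\<^sup>2 * (Re (logical_signal M s (code_weights s M)))\<^sup>2)
           sequentially (\<lambda>M. 16 * t\<^sup>2 * (real M / 4)^(2 * s))"
    and "asymp_equiv (\<lambda>M. 4 * t\<^sup>2 * (frakS_distance M s)\<^sup>2)
           sequentially (\<lambda>M. 16 * t\<^sup>2 * (real M / 4)^(2 * s))"
proof -
  define d where "d M = Re (logical_signal M s (code_weights s M))" for M
  define k where "k M = 4 * (real M / 4) ^ s" for M :: nat
  have "eventually (\<lambda>M. \<bar>d M\<bar> \<le> 2 * frakS_distance M s \<and> 2 * frakS_distance M s \<le> k M \<and> d M \<noteq> 0)
      sequentially"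
    using eventually_logical_signal[OF assms(1)] by eventually_elim (simp add: d_def k_def)
  note ratios = tendsto_square_ratios[OF assms(2) tendsto_signal_bound_ratio[OF assms(1),
        folded d_def k_def] this]
  have "(real M / 4)^(2 * s) = ((real M / 4) ^ s)\<^sup>2" for M
    by (metis power_mult mult.commute)
  then have target: "(\<lambda>M. 16 * t\<^sup>2 * (real M / 4)^(2 * s)) = (\<lambda>M. t\<^sup>2 * (k M)\<^sup>2)"
    by (simp add: k_def power_mult_distrib ac_simps)
  show "((\<lambda>M. t\<^sup>2 * (Re (logical_signal M s (code_weights s M)))\<^sup>2
            / (4 * t\<^sup>2 * (frakS_distance M s)\<^sup>2)) \<longlongrightarrow> 1) sequentially"
    using ratios(1) by (simp add: d_def)
  show "asymp_equiv (\<lambda>M. t\<^sup>2 * (Re (logical_signal M s (code_weights s M)))\<^sup>2)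
           sequentially (\<lambda>M. 16 * t\<^sup>2 * (real M / 4)^(2 * s))"
    unfolding target using ratios(2) by (intro asymp_equivI') (simp add: d_def)
  show "asymp_equiv (\<lambda>M. 4 * t\<^sup>2 * (frakS_distance M s)\<^sup>2)
           sequentially (\<lambda>M. 16 * t\<^sup>2 * (real M / 4)^(2 * s))"
    unfolding target using ratios(3) by (intro asymp_equivI')
qed

theorem mainTheorem9:
  fixes s :: nat and t :: real
  assumes hs: "s \<ge> 2" and ht: "t \<noteq> 0"
  shows "(\<exists>M0::nat. \<exists>x :: nat \<Rightarrow> nat \<Rightarrow> real.
      (\<forall>M\<ge>M0.
          \<comment> \<open>(i)\<close>
          (\<forall>k<s. nk M s k < nk M s (k+1) \<and> nk M s (k+1) \<ge> nk M s k + 3)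
          \<comment> \<open>(ii)\<close>
        \<and> linsys M s (x M)
        \<and> (\<forall>y. linsys M s y \<longrightarrow> (\<forall>k\<le>s. y k = x M k))
        \<and> (\<forall>k\<le>s. x M k > 0)
          \<comment> \<open>(iii)\<close>
        \<and> finner M (code0 M s (x M)) (code0 M s (x M)) = 1
        \<and> finner M (code1 M s (x M)) (code1 M s (x M)) = 1
        \<and> finner M (code0 M s (x M)) (code1 M s (x M)) = 0
        \<and> (\<forall>S\<in>frakS M s. \<exists>r::real. \<forall>i\<le>M. \<forall>j\<le>M.
              mmul M (codeP M s (x M)) (mmul M S (codeP M s (x M))) i j
                = complex_of_real r * codeP M s (x M) i j)
          \<comment> \<open>(iv)\<close>
        \<and> melem M (code0 M s (x M)) (mpow M (numop M) s) (code1 M s (x M)) = 0)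
    \<and> (\<forall>k\<le>s. (\<lambda>M. x M k) \<longlonglongrightarrow>
          2 / real s - (if k = 0 then 1 / real s else 0) - (if k = s then 1 / real s else 0))
    \<and> (\<lambda>M. (melem M (code0 M s (x M)) (mpow M (numop M) s) (code0 M s (x M))
              - melem M (code1 M s (x M)) (mpow M (numop M) s) (code1 M s (x M)))
            / complex_of_real ((-1)^s * (real M)^s * 4 powr (1 - real s))) \<longlonglongrightarrow> 1
    \<and> (\<lambda>M. t\<^sup>2 * (Re (melem M (code0 M s (x M)) (mpow M (numop M) s) (code0 M s (x M))
              - melem M (code1 M s (x M)) (mpow M (numop M) s) (code1 M s (x M))))\<^sup>2
            / (4 * t\<^sup>2 * (INF S\<in>frakS M s. opnorm M (\<lambda>i j. mpow M (numop M) s i j - S i j))\<^sup>2))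
        \<longlonglongrightarrow> 1
    \<and> asymp_equiv (\<lambda>M. t\<^sup>2 * (Re (melem M (code0 M s (x M)) (mpow M (numop M) s) (code0 M s (x M))
              - melem M (code1 M s (x M)) (mpow M (numop M) s) (code1 M s (x M))))\<^sup>2)
        sequentially (\<lambda>M. 16 * t\<^sup>2 * (real M / 4)^(2 * s))
    \<and> asymp_equiv (\<lambda>M. 4 * t\<^sup>2 * (INF S\<in>frakS M s. opnorm M (\<lambda>i j. mpow M (numop M) s i j - S i j))\<^sup>2)
        sequentially (\<lambda>M. 16 * t\<^sup>2 * (real M / 4)^(2 * s)))
  \<and> (\<forall>M::nat. M \<ge> 1 \<longrightarrow>
       2 * (INF S\<in>frakS M s. opnorm M (\<lambda>i j. mpow M (numop M) s i j - S i j)) \<le> 4 * (real M / 4)^s)"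
proof -
  have "s > 0"
    using hs by simp
  have "2 * trap_weight s k / real s
      = 2 / real s - (if k = 0 then 1 / real s else 0) - (if k = s then 1 / real s else 0)" for k
    using \<open>s > 0\<close> by (simp add: trap_weight_def field_simps)
  then show ?thesis
    using eventually_code_properties[OF \<open>s > 0\<close>, unfolded eventually_sequentially]
      tendsto_code_weights[OF \<open>s > 0\<close>] tendsto_logical_signal[OF \<open>s > 0\<close>]
      qfi_asymptotics[OF \<open>s > 0\<close> ht] frakS_distance_le[OF \<open>s > 0\<close>]
    by (elim exE) (intro exI[of _ "code_weights s"] exI conjI; auto)
qed

end
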